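(* For a commutative ring $R$ the following are equivalent: (i) every $R$-module has avoidance; (ii) every $R$-algebra is an avoidance ring; (iii) every ring extension of $R$ (every ring $S$ with an injective ring map $R\to S$) is an avoidance ring; (iv) every finitely generated $R$-module has avoidance.
   Context: All rings are commutative with $1\neq 0$. An $R$-module $M$ has avoidance if whenever $M=\bigcup_{k=1}^n M_k$ for finitely many $R$-submodules $M_k$, then $M=M_k$ for some $k$. An ideal $I$ of a ring has avoidance if whenever $I\subseteq\bigcup_{k=1}^n I_k$ for finitely many ideals $I_k$, then $I\subseteq I_k$ for some $k$; a ring is an avoidance ring if every ideal has avoidance. *)

theory Defs
  imports "HOL-Algebra.Module" "HOL-Algebra.Ideal" "HOL-Algebra.RingHom"
begin

definition submod :: "('a, 'c) ring_scheme \<Rightarrow> ('a, 'b) module \<Rightarrow> 'b set \<Rightarrow> bool" where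
  "submod R M N \<longleftrightarrow> additive_subgroup N M \<and>
     (\<forall>a \<in> carrier R. \<forall>x \<in> N. a \<odot>\<^bsub>M\<^esub> x \<in> N)"

definition module_avoidance :: "('a, 'c) ring_scheme \<Rightarrow> ('a, 'b) module \<Rightarrow> bool" where
  "module_avoidance R M \<longleftrightarrow>
     (\<forall>F. finite F \<and> (\<forall>N \<in> F. submod R M N) \<and> carrier M = \<Union>F \<longrightarrow> carrier M \<in> F)"

definition fin_gen_module :: "('a, 'c) ring_scheme \<Rightarrow> ('a, 'b) module \<Rightarrow> bool" where
  "fin_gen_module R M \<longleftrightarrow>
     (\<exists>G. finite G \<and> G \<subseteq> carrier M \<and>
        (\<forall>x \<in> carrier M. \<exists>c. c \<in> G \<rightarrow> carrier R \<and>
            x = (\<Oplus>\<^bsub>M\<^esub> g \<in> G. c g \<odot>\<^bsub>M\<^esub> g)))"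

definition ideal_avoidance :: "'s set \<Rightarrow> ('s, 'd) ring_scheme \<Rightarrow> bool" where
  "ideal_avoidance I S \<longleftrightarrow>
     (\<forall>F. finite F \<and> (\<forall>J \<in> F. ideal J S) \<and> I \<subseteq> \<Union>F \<longrightarrow> (\<exists>J \<in> F. I \<subseteq> J))"

definition avoidance_ring :: "('s, 'd) ring_scheme \<Rightarrow> bool" where
  "avoidance_ring S \<longleftrightarrow> (\<forall>I. ideal I S \<longrightarrow> ideal_avoidance I S)"

text \<open>The four conditions of the proposition, with the type of the modules / rings
  quantified over given as an explicit type parameter.\<close>
definition all_modules_avoid :: "('a, 'c) ring_scheme \<Rightarrow> 'b itself \<Rightarrow> bool" where
  "all_modules_avoid R (_ :: 'b itself) \<longleftrightarrow>
     (\<forall>M :: ('a, 'b) module. module R M \<longrightarrow> module_avoidance R M)"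

definition all_algebras_avoidance :: "('a, 'c) ring_scheme \<Rightarrow> 's itself \<Rightarrow> bool" where
  "all_algebras_avoidance R (_ :: 's itself) \<longleftrightarrow>
     (\<forall>S :: 's ring. \<forall>\<phi>. cring S \<and> \<one>\<^bsub>S\<^esub> \<noteq> \<zero>\<^bsub>S\<^esub> \<and> \<phi> \<in> ring_hom R S
        \<longrightarrow> avoidance_ring S)"

definition all_extensions_avoidance :: "('a, 'c) ring_scheme \<Rightarrow> 's itself \<Rightarrow> bool" where
  "all_extensions_avoidance R (_ :: 's itself) \<longleftrightarrow>
     (\<forall>S :: 's ring. \<forall>\<phi>. cring S \<and> \<one>\<^bsub>S\<^esub> \<noteq> \<zero>\<^bsub>S\<^esub> \<and> \<phi> \<in> ring_hom R S
        \<and> inj_on \<phi> (carrier R) \<longrightarrow> avoidance_ring S)"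

definition all_fg_modules_avoid :: "('a, 'c) ring_scheme \<Rightarrow> 'b itself \<Rightarrow> bool" where
  "all_fg_modules_avoid R (_ :: 'b itself) \<longleftrightarrow>
     (\<forall>M :: ('a, 'b) module. module R M \<and> fin_gen_module R M \<longrightarrow> module_avoidance R M)"

end

theory Submission
  imports "HOL-Algebra.Ring_Divisibility" Defs
begin

text \<open>If every residue field \<open>R/m\<close> is infinite, then \<open>R\<close> is not a finite union of cosets
  \<open>a + J\<close> of proper ideals: enlarge each \<open>J\<close> to a maximal ideal, choose in each of the
  finitely many infinite fields \<open>R/m\<close> a residue different from the prescribed ones, and glue these
  choices with the Chinese remainder theorem. This coset avoidance gives avoidance for every
  submodule \<open>V\<close> of every \<open>R\<close>-module: in an irredundant cover \<open>V \<subseteq> N\<^sub>1 \<union> \<dots> \<union> N\<^sub>n\<close> pick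
  \<open>x \<in> V\<close> lying in \<open>N\<^sub>1\<close> only; for \<open>y \<in> V\<close> the scalars \<open>r\<close> with \<open>y + r x \<in> N\<^sub>i\<close> (\<open>i > 1\<close>)
  form a coset of the proper ideal \<open>(N\<^sub>i : x)\<close>, so some \<open>y + r x\<close> lies in \<open>N\<^sub>1\<close>, and then so
  does \<open>y\<close>. Ideals of an \<open>R\<close>-algebra are submodules of the algebra viewed as an \<open>R\<close>-module.
  Conversely, if some residue field \<open>k\<close> is finite, the idealization \<open>R \<ltimes> k\<^sup>2\<close> is a ring
  extension of \<open>R\<close>, generated as an \<open>R\<close>-module by three elements, and both the ideal
  \<open>0 \<ltimes> k\<^sup>2\<close> and the module \<open>R \<ltimes> k\<^sup>2\<close> are covered by the \<open>|k| + 1\<close> lines through the origin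
  of \<open>k\<^sup>2\<close> without being contained in any of them.\<close>

section \<open>Coset avoidance from infinite residue fields\<close>

lemma (in cring) exists_maximalideal_superset:
  assumes "ideal J R" and "\<one> \<notin> J"
  shows "\<exists>M. maximalideal M R \<and> J \<subseteq> M"
proof -
  define A where "A = {I. ideal I R \<and> J \<subseteq> I \<and> \<one> \<notin> I}"
  have "\<Union>C \<in> A" if "C \<noteq> {}" and "subset.chain A C" for C
  proof -
    have "subset.chain {I. ideal I R} C"
      using that(2) unfolding A_def pred_on.chain_def by blast
    then have "ideal (\<Union>C) R"
      using chain_Union_is_ideal \<open>C \<noteq> {}\<close> by presburger
    then show ?thesis
      using that unfolding A_def pred_on.chain_def by blast
  qed
  moreover have "J \<in> A" using assms unfolding A_def by blast
  ultimately obtain M where M: "M \<in> A" and max: "\<And>X. X \<in> A \<Longrightarrow> M \<subseteq> X \<Longrightarrow> X = M"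
    using subset_Zorn_nonempty[of A] by blast
  have "maximalideal M R"
  proof (rule maximalidealI)
    show "ideal M R" and "carrier R \<noteq> M" using M unfolding A_def by auto
    show "K = M \<or> K = carrier R" if "ideal K R" "M \<subseteq> K" "K \<subseteq> carrier R" for K
      using that max[of K] M ideal.one_imp_carrier unfolding A_def by blast
  qed
  with M show ?thesis unfolding A_def by blast
qed

lemma (in cring) maximalideals_comaximal:
  assumes "maximalideal M R" "maximalideal M' R" "M' \<noteq> M"
  shows "\<exists>s\<in>M'. \<one> \<ominus> s \<in> M"
proof -
  have sum: "x \<in> set_add R M' M \<longleftrightarrow> (\<exists>s\<in>M'. \<exists>u\<in>M. x = s \<oplus> u)" for x
    unfolding set_add_def' by simp
  interpret M: maximalideal M R by fact
  interpret M': maximalideal M' R by fact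
  have "M \<subseteq> set_add R M' M"
  proof
    fix x assume "x \<in> M"
    then have "x = \<zero> \<oplus> x" using M.a_subset by auto
    then show "x \<in> set_add R M' M" using sum \<open>x \<in> M\<close> M'.zero_closed by blast
  qed
  moreover have "M' \<subseteq> set_add R M' M"
  proof
    fix x assume "x \<in> M'"
    then have "x = x \<oplus> \<zero>" using M'.a_subset by auto
    then show "x \<in> set_add R M' M" using sum \<open>x \<in> M'\<close> M.zero_closed by blast
  qed
  moreover have "set_add R M' M \<subseteq> carrier R"
    using M'.a_subset M.a_subset by (auto simp: sum)
  ultimately have sum_cases: "set_add R M' M = M \<or> set_add R M' M = carrier R"
    using M.I_maximal[OF add_ideals[OF M'.is_ideal M.is_ideal]] by blast
  have "set_add R M' M \<noteq> M"
  proof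
    assume "set_add R M' M = M"
    then have "M' \<subseteq> M" using \<open>M' \<subseteq> set_add R M' M\<close> by simp
    then show False
      using M'.I_maximal[OF M.is_ideal _ M.a_subset] M.I_notcarr \<open>M' \<noteq> M\<close> by blast
  qed
  with sum_cases have "\<one> \<in> set_add R M' M" by simp
  then obtain s u where su: "s \<in> M'" "u \<in> M" "\<one> = s \<oplus> u"
    using sum by blast
  then have "s \<in> carrier R" "u \<in> carrier R" using M'.a_subset M.a_subset by auto
  then have "(s \<oplus> u) \<ominus> s = u" by algebra
  then have "\<one> \<ominus> s = u" using su(3) by simp
  then show ?thesis using su by blast
qed

lemma (in cring) exists_separating_element:
  assumes "finite \<M>" "\<forall>m\<in>\<M>. maximalideal m R" "maximalideal M R" "M \<notin> \<M>"
  shows "\<exists>e\<in>carrier R. \<one> \<ominus> e \<in> M \<and> (\<forall>m\<in>\<M>. e \<in> m)"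
  using assms
proof (induction \<M> rule: finite_induct)
  case empty
  have "\<one> \<ominus> \<one> = \<zero>" by algebra
  then have "\<one> \<ominus> \<one> \<in> M"
    using additive_subgroup.zero_closed[OF ideal.axioms(1)[OF maximalideal.axioms(1)[OF empty.prems(2)]]]
    by (simp only:)
  then show ?case by blast
next
  case (insert m \<M>)
  have max: "\<forall>m\<in>\<M>. maximalideal m R" "M \<notin> \<M>" and "m \<noteq> M" "maximalideal m R"
    using insert.prems(1,3) by auto
  obtain e where e: "e \<in> carrier R" "\<one> \<ominus> e \<in> M" "\<forall>m\<in>\<M>. e \<in> m"
    using insert.IH[OF max(1) insert.prems(2) max(2)] by blast
  from \<open>m \<noteq> M\<close> \<open>maximalideal m R\<close> obtain s where s: "s \<in> m" "\<one> \<ominus> s \<in> M"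
    using maximalideals_comaximal[OF insert.prems(2)] by blast
  have M: "ideal M R" and m: "ideal m R"
    using maximalideal.axioms(1)[OF insert.prems(2)] maximalideal.axioms(1)[OF \<open>maximalideal m R\<close>] .
  have sc: "s \<in> carrier R" using ideal.Icarr[OF m s(1)] .
  have "\<one> \<ominus> e \<otimes> s = (\<one> \<ominus> e) \<oplus> e \<otimes> (\<one> \<ominus> s)"
    using e(1) sc by algebra
  moreover have "(\<one> \<ominus> e) \<oplus> e \<otimes> (\<one> \<ominus> s) \<in> M"
    using ideal.I_l_closed[OF M s(2) e(1)] e(2)
      additive_subgroup.a_closed[OF ideal.axioms(1)[OF M]] by simp
  moreover have "e \<otimes> s \<in> m" using ideal.I_l_closed[OF m s(1) e(1)] .
  moreover have "e \<otimes> s \<in> m'" if "m' \<in> \<M>" for m'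
  proof -
    have "maximalideal m' R" using insert.prems(1) that by blast
    then show ?thesis
      using ideal.I_r_closed[OF maximalideal.axioms(1) e(3)[rule_format, OF that] sc] by blast
  qed
  moreover have "e \<otimes> s \<in> carrier R" using e(1) sc by simp
  ultimately show ?case by (metis insert_iff)
qed

lemma (in cring) chinese_remainder_elements:
  assumes "finite \<M>" "\<forall>m\<in>\<M>. maximalideal m R" "f \<in> \<M> \<rightarrow> carrier R"
  shows "\<exists>r\<in>carrier R. \<forall>m\<in>\<M>. r \<ominus> f m \<in> m"
  using assms
proof (induction \<M> rule: finite_induct)
  case empty
  then show ?case by blast
next
  case (insert M \<M>)
  then obtain r where r: "r \<in> carrier R" "\<forall>m\<in>\<M>. r \<ominus> f m \<in> m" by auto
  obtain e where e: "e \<in> carrier R" "\<one> \<ominus> e \<in> M" "\<forall>m\<in>\<M>. e \<in> m"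
    using exists_separating_element[OF insert.hyps(1)] insert.hyps(2) insert.prems(1)
    by blast
  have fM: "f M \<in> carrier R" using insert.prems(2) by blast
  define r' where "r' = r \<oplus> e \<otimes> (f M \<ominus> r)"
  have r'c: "r' \<in> carrier R" using r(1) e(1) fM unfolding r'_def by simp
  have "r' \<ominus> f m \<in> m" if "m \<in> \<M>" for m
  proof -
    have m: "ideal m R" "f m \<in> carrier R" using that insert.prems maximalideal.axioms(1) by auto
    have "r' \<ominus> f m = (r \<ominus> f m) \<oplus> e \<otimes> (f M \<ominus> r)"
      using m(2) r(1) e(1) fM unfolding r'_def by algebra
    moreover have "e \<otimes> (f M \<ominus> r) \<in> m"
      using ideal.I_r_closed[OF m(1)] e(3) that fM r(1) by simp
    ultimately show ?thesis
      using additive_subgroup.a_closed[OF ideal.axioms(1)[OF m(1)]] r(2) that by simp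
  qed
  moreover have "r' \<ominus> f M \<in> M"
  proof -
    have M: "ideal M R" using insert.prems maximalideal.axioms(1) by auto
    have "r' \<ominus> f M = \<ominus> ((\<one> \<ominus> e) \<otimes> (f M \<ominus> r))"
      using r(1) e(1) fM unfolding r'_def by algebra
    moreover have "(\<one> \<ominus> e) \<otimes> (f M \<ominus> r) \<in> M"
      using ideal.I_r_closed[OF M e(2)] fM r(1) by simp
    ultimately show ?thesis
      using additive_subgroup.a_inv_closed[OF ideal.axioms(1)[OF M]] by simp
  qed
  ultimately show ?case using r'c by blast
qed

lemma additive_subgroup_add_cancel:
  assumes "additive_subgroup H G" "abelian_group G" "x \<in> carrier G" "y \<in> H"
  shows "x \<oplus>\<^bsub>G\<^esub> y \<in> H \<longleftrightarrow> x \<in> H"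
proof -
  interpret H: additive_subgroup H G by fact
  interpret G: abelian_group G by fact
  have yc: "y \<in> carrier G" using assms(4) H.a_subset by blast
  have "(x \<oplus>\<^bsub>G\<^esub> y) \<oplus>\<^bsub>G\<^esub> \<ominus>\<^bsub>G\<^esub> y = x"
    using assms(3) yc by (simp add: G.a_assoc G.r_neg)
  then show ?thesis
    using H.a_closed H.a_inv_closed assms(4) by metis
qed

lemma (in ring) exists_avoiding_residue:
  assumes "ideal M R" "infinite (carrier (R Quot M))" "finite A" "A \<subseteq> carrier R"
  shows "\<exists>c\<in>carrier R. \<forall>a\<in>A. c \<ominus> a \<notin> M"
proof -
  interpret M: ideal M R by fact
  have "carrier (R Quot M) = (+>) M ` carrier R"
    by (auto simp: FactRing_def A_RCOSETS_def')
  with assms(2) have "infinite ((+>) M ` carrier R)" by simp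
  moreover have "finite ((+>) M ` A)" using assms(3) by simp
  ultimately have "\<not> (+>) M ` carrier R \<subseteq> (+>) M ` A"
    using finite_subset by blast
  then obtain c where c: "c \<in> carrier R" "M +> c \<notin> (+>) M ` A" by blast
  have "c \<ominus> a \<notin> M" if "a \<in> A" for a
  proof
    assume "c \<ominus> a \<in> M"
    then have "c \<in> M +> a"
      using M.a_rcos_module_minus[OF ring_axioms] that assms(4) c(1) by blast
    then have "M +> a = M +> c" using M.a_repr_independence' that assms(4) by blast
    then show False using c(2) that by auto
  qed
  with c(1) show ?thesis by blast
qed

definition coset_avoidance :: "('a, 'c) ring_scheme \<Rightarrow> bool" where
  "coset_avoidance R \<longleftrightarrow>
     (\<forall>P. finite P \<and> (\<forall>(a, J)\<in>P. a \<in> carrier R \<and> ideal J R \<and> \<one>\<^bsub>R\<^esub> \<notin> J)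
        \<longrightarrow> (\<exists>r\<in>carrier R. \<forall>(a, J)\<in>P. r \<ominus>\<^bsub>R\<^esub> a \<notin> J))"

lemma (in cring) exists_avoiding_maximal_cosets:
  assumes infinite: "\<And>M. maximalideal M R \<Longrightarrow> infinite (carrier (R Quot M))"
    and P: "finite P" "\<forall>(a, m)\<in>P. a \<in> carrier R \<and> maximalideal m R"
  shows "\<exists>r\<in>carrier R. \<forall>(a, m)\<in>P. r \<ominus> a \<notin> m"
proof -
  define \<M> where "\<M> = snd ` P"
  define A where "A m = {a. (a, m) \<in> P}" for m
  have max: "\<forall>m\<in>\<M>. maximalideal m R" using P(2) unfolding \<M>_def by auto
  have "\<forall>m\<in>\<M>. \<exists>c. c \<in> carrier R \<and> (\<forall>a\<in>A m. c \<ominus> a \<notin> m)"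
  proof
    fix m assume "m \<in> \<M>"
    have "\<exists>c\<in>carrier R. \<forall>a\<in>A m. c \<ominus> a \<notin> m"
    proof (rule exists_avoiding_residue)
      show "ideal m R" using maximalideal.axioms(1) max \<open>m \<in> \<M>\<close> by blast
      show "infinite (carrier (R Quot m))" using infinite max \<open>m \<in> \<M>\<close> by blast
      have "A m \<subseteq> fst ` P" unfolding A_def by force
      then show "finite (A m)" using P(1) finite_subset by blast
      show "A m \<subseteq> carrier R" using P(2) unfolding A_def by blast
    qed
    then show "\<exists>c. c \<in> carrier R \<and> (\<forall>a\<in>A m. c \<ominus> a \<notin> m)" by blast
  qed
  from bchoice[OF this] obtain c
    where c: "\<forall>m\<in>\<M>. c m \<in> carrier R \<and> (\<forall>a\<in>A m. c m \<ominus> a \<notin> m)" by blast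
  have "finite \<M>" using P(1) unfolding \<M>_def by blast
  then obtain r where r: "r \<in> carrier R" "\<forall>m\<in>\<M>. r \<ominus> c m \<in> m"
    using chinese_remainder_elements[OF _ max] c by blast
  have "\<forall>(a, m)\<in>P. r \<ominus> a \<notin> m"
  proof clarify
    fix a m assume am: "(a, m) \<in> P" "r \<ominus> a \<in> m"
    have m: "m \<in> \<M>" "a \<in> A m" using am(1) unfolding \<M>_def A_def by force+
    have carr: "a \<in> carrier R" "c m \<in> carrier R" using am(1) P(2) c m(1) by auto
    have mi: "ideal m R" using maximalideal.axioms(1)[OF bspec[OF max m(1)]] .
    have "r \<ominus> a = (c m \<ominus> a) \<oplus> (r \<ominus> c m)"
      using carr r(1) by algebra
    with am(2) have "(c m \<ominus> a) \<oplus> (r \<ominus> c m) \<in> m" by simp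
    moreover have "r \<ominus> c m \<in> m" using r(2) m(1) by blast
    moreover have "c m \<ominus> a \<in> carrier R" using carr by simp
    ultimately have "c m \<ominus> a \<in> m"
      using additive_subgroup_add_cancel[OF ideal.axioms(1)[OF mi] is_abelian_group] by blast
    then show False using c m by blast
  qed
  with r(1) show ?thesis ..
qed

lemma (in cring) coset_avoidance_if_infinite_residue_fields:
  assumes infinite: "\<And>M. maximalideal M R \<Longrightarrow> infinite (carrier (R Quot M))"
  shows "coset_avoidance R"
  unfolding coset_avoidance_def
proof (intro allI impI, elim conjE)
  fix P assume P: "finite P" "\<forall>(a, J)\<in>P. a \<in> carrier R \<and> ideal J R \<and> \<one> \<notin> J"
  define mx where "mx J = (SOME M. maximalideal M R \<and> J \<subseteq> M)" for J
  have mx: "maximalideal (mx J) R" "J \<subseteq> mx J" if "(a, J) \<in> P" for a J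
    using someI_ex[OF exists_maximalideal_superset] P(2) that unfolding mx_def by blast+
  have "finite ((\<lambda>(a, J). (a, mx J)) ` P)" using P(1) by simp
  moreover have "\<forall>(a, m)\<in>(\<lambda>(a, J). (a, mx J)) ` P. a \<in> carrier R \<and> maximalideal m R"
    using P(2) mx by auto
  ultimately obtain r where r: "r \<in> carrier R" "\<forall>(a, m)\<in>(\<lambda>(a, J). (a, mx J)) ` P. r \<ominus> a \<notin> m"
    using exists_avoiding_maximal_cosets[OF infinite] by blast
  have "\<forall>(a, J)\<in>P. r \<ominus> a \<notin> J"
    using r(2) mx(2) by fastforce
  with r(1) show "\<exists>r\<in>carrier R. \<forall>(a, J)\<in>P. r \<ominus> a \<notin> J" ..
qed

section \<open>Avoidance for modules and algebras\<close>

lemma submod_carrier: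
  assumes "module R M"
  shows "submod R M (carrier M)"
proof -
  interpret module R M by fact
  have "subgroup (carrier M) (add_monoid M)" using group.subgroup_self[OF M.a_group] by simp
  then show ?thesis unfolding submod_def by (auto intro: additive_subgroupI smult_closed)
qed

lemma submod_colon_ideal:
  fixes R (structure) and M :: "('a, 'b) module"
  assumes "module R M" "submod R M N" "x \<in> carrier M"
  shows "ideal {r \<in> carrier R. r \<odot>\<^bsub>M\<^esub> x \<in> N} R"
proof -
  interpret module R M by fact
  interpret N: additive_subgroup N M using assms(2) unfolding submod_def by blast
  have smult: "\<And>a y. a \<in> carrier R \<Longrightarrow> y \<in> N \<Longrightarrow> a \<odot>\<^bsub>M\<^esub> y \<in> N"
    using assms(2) unfolding submod_def by blast
  show ?thesis
  proof (intro idealI subgroup.intro)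
    fix a b assume "a \<in> {r \<in> carrier R. r \<odot>\<^bsub>M\<^esub> x \<in> N}" "b \<in> {r \<in> carrier R. r \<odot>\<^bsub>M\<^esub> x \<in> N}"
    then show "a \<otimes>\<^bsub>add_monoid R\<^esub> b \<in> {r \<in> carrier R. r \<odot>\<^bsub>M\<^esub> x \<in> N}"
      using smult_l_distr assms(3) by simp
  next
    fix a assume a: "a \<in> {r \<in> carrier R. r \<odot>\<^bsub>M\<^esub> x \<in> N}"
    then show "inv\<^bsub>add_monoid R\<^esub> a \<in> {r \<in> carrier R. r \<odot>\<^bsub>M\<^esub> x \<in> N}"
      using assms(3) by (simp add: smult_l_minus flip: a_inv_def)
  next
    fix a r assume a: "a \<in> {r \<in> carrier R. r \<odot>\<^bsub>M\<^esub> x \<in> N}" and r: "r \<in> carrier R"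
    then have "(r \<otimes> a) \<odot>\<^bsub>M\<^esub> x \<in> N" using smult_assoc1 assms(3) smult by simp
    then show "r \<otimes> a \<in> {r \<in> carrier R. r \<odot>\<^bsub>M\<^esub> x \<in> N}"
      and "a \<otimes> r \<in> {r \<in> carrier R. r \<odot>\<^bsub>M\<^esub> x \<in> N}"
      using a r R.m_comm by auto
  qed (use assms(3) in \<open>auto intro: R.ring_axioms\<close>)
qed

lemma submod_smult_diff:
  fixes R (structure) and M :: "('a, 'b) module"
  assumes "module R M" "submod R M N" "x \<in> carrier M" "y \<in> carrier M"
    "a \<in> carrier R" "r \<in> carrier R"
    "y \<oplus>\<^bsub>M\<^esub> a \<odot>\<^bsub>M\<^esub> x \<in> N" "y \<oplus>\<^bsub>M\<^esub> r \<odot>\<^bsub>M\<^esub> x \<in> N"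
  shows "(r \<ominus> a) \<odot>\<^bsub>M\<^esub> x \<in> N"
proof -
  interpret module R M by fact
  interpret N: additive_subgroup N M using assms(2) unfolding submod_def by blast
  have "(r \<ominus> a) \<odot>\<^bsub>M\<^esub> x = r \<odot>\<^bsub>M\<^esub> x \<ominus>\<^bsub>M\<^esub> a \<odot>\<^bsub>M\<^esub> x"
    using assms(3,5,6) by (simp add: R.minus_eq smult_l_distr smult_l_minus M.minus_eq)
  also have "\<dots> = (y \<oplus>\<^bsub>M\<^esub> r \<odot>\<^bsub>M\<^esub> x) \<ominus>\<^bsub>M\<^esub> (y \<oplus>\<^bsub>M\<^esub> a \<odot>\<^bsub>M\<^esub> x)"
    using assms(3-6) by (simp add: M.minus_eq M.minus_add M.a_ac M.r_neg2)
  finally show ?thesis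
    using assms(7,8) by (simp add: M.minus_eq N.a_closed N.a_inv_closed)
qed

lemma exists_translate_avoiding_submods:
  fixes R (structure) and M :: "('a, 'b) module"
  assumes mod: "module R M" and "coset_avoidance R"
    and G: "finite G" "\<forall>N\<in>G. submod R M N \<and> x \<notin> N" and xy: "x \<in> carrier M" "y \<in> carrier M"
  shows "\<exists>r\<in>carrier R. \<forall>N\<in>G. y \<oplus>\<^bsub>M\<^esub> r \<odot>\<^bsub>M\<^esub> x \<notin> N"
proof -
  interpret module R M by fact
  define J where "J N = {r \<in> carrier R. r \<odot>\<^bsub>M\<^esub> x \<in> N}" for N
  define G' where "G' = {N \<in> G. \<exists>a \<in> carrier R. y \<oplus>\<^bsub>M\<^esub> a \<odot>\<^bsub>M\<^esub> x \<in> N}"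
  obtain a where a: "\<forall>N\<in>G'. a N \<in> carrier R \<and> y \<oplus>\<^bsub>M\<^esub> a N \<odot>\<^bsub>M\<^esub> x \<in> N"
    using bchoice[of G' "\<lambda>N a. a \<in> carrier R \<and> y \<oplus>\<^bsub>M\<^esub> a \<odot>\<^bsub>M\<^esub> x \<in> N"]
    unfolding G'_def by blast
  \<comment> \<open>For \<open>N \<in> G'\<close> the scalars \<open>r\<close> with \<open>y + r x \<in> N\<close> form the coset \<open>a N + J N\<close>.\<close>
  define P where "P = (\<lambda>N. (a N, J N)) ` G'"
  have "\<forall>(b, I)\<in>P. b \<in> carrier R \<and> ideal I R \<and> \<one> \<notin> I"
    unfolding P_def
  proof clarify
    fix N assume "N \<in> G'"
    then have "N \<in> G" unfolding G'_def by blast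
    then show "a N \<in> carrier R \<and> ideal (J N) R \<and> \<one> \<notin> J N"
      using a \<open>N \<in> G'\<close> submod_colon_ideal[OF mod _ xy(1)] G(2) xy(1) unfolding J_def by auto
  qed
  moreover have "finite P" using G(1) unfolding P_def G'_def by simp
  ultimately obtain r where r: "r \<in> carrier R" "\<forall>(b, I)\<in>P. r \<ominus> b \<notin> I"
    using \<open>coset_avoidance R\<close> unfolding coset_avoidance_def by blast
  have "y \<oplus>\<^bsub>M\<^esub> r \<odot>\<^bsub>M\<^esub> x \<notin> N" if "N \<in> G" for N
  proof
    assume N: "y \<oplus>\<^bsub>M\<^esub> r \<odot>\<^bsub>M\<^esub> x \<in> N"
    with that r(1) have "N \<in> G'" unfolding G'_def by blast
    then have "a N \<in> carrier R" "y \<oplus>\<^bsub>M\<^esub> a N \<odot>\<^bsub>M\<^esub> x \<in> N" using a by auto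
    then have "(r \<ominus> a N) \<odot>\<^bsub>M\<^esub> x \<in> N"
      using submod_smult_diff[OF mod _ xy _ r(1) _ N] G(2) that by blast
    moreover have "r \<ominus> a N \<notin> J N" using r(2) \<open>N \<in> G'\<close> unfolding P_def by auto
    ultimately show False using \<open>a N \<in> carrier R\<close> r(1) unfolding J_def by simp
  qed
  with r(1) show ?thesis by blast
qed

lemma submod_subset_if_element_only_in:
  fixes R (structure) and M :: "('a, 'b) module"
  assumes mod: "module R M" and cos: "coset_avoidance R"
    and F: "finite F" "\<forall>N\<in>F. submod R M N" and V: "submod R M V" "V \<subseteq> \<Union>F"
    and x: "N\<^sub>1 \<in> F" "x \<in> V" "x \<notin> \<Union>(F - {N\<^sub>1})"
  shows "V \<subseteq> N\<^sub>1"
proof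
  interpret module R M by fact
  have sub: "N \<subseteq> carrier M" if "submod R M N" for N
    using that additive_subgroup.a_subset unfolding submod_def by blast
  have xc: "x \<in> carrier M" and xN1: "x \<in> N\<^sub>1" using x V sub by blast+
  have N1: "additive_subgroup N\<^sub>1 M" "\<forall>a\<in>carrier R. \<forall>z\<in>N\<^sub>1. a \<odot>\<^bsub>M\<^esub> z \<in> N\<^sub>1"
    using F(2) x(1) unfolding submod_def by blast+
  fix y assume "y \<in> V"
  then have yc: "y \<in> carrier M" using V(1) sub by blast
  have G: "finite (F - {N\<^sub>1})" "\<forall>N\<in>F - {N\<^sub>1}. submod R M N \<and> x \<notin> N" using F x(3) by auto
  obtain r where r: "r \<in> carrier R" "\<forall>N\<in>F - {N\<^sub>1}. y \<oplus>\<^bsub>M\<^esub> r \<odot>\<^bsub>M\<^esub> x \<notin> N"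
    using exists_translate_avoiding_submods[OF mod cos G xc yc] by blast
  have "y \<oplus>\<^bsub>M\<^esub> r \<odot>\<^bsub>M\<^esub> x \<in> V"
    using V(1) r(1) x(2) \<open>y \<in> V\<close> unfolding submod_def by (simp add: additive_subgroup.a_closed)
  then have "y \<oplus>\<^bsub>M\<^esub> r \<odot>\<^bsub>M\<^esub> x \<in> N\<^sub>1" using V(2) r(2) by blast
  moreover have "r \<odot>\<^bsub>M\<^esub> x \<in> N\<^sub>1" using N1(2) xN1 r(1) by blast
  ultimately show "y \<in> N\<^sub>1"
    using additive_subgroup_add_cancel[OF N1(1) M.abelian_group_axioms yc] by blast
qed

lemma submod_avoidance_if_coset_avoidance:
  fixes R (structure) and M :: "('a, 'b) module"
  assumes mod: "module R M" and cos: "coset_avoidance R" and V: "submod R M V"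
  shows "finite F \<Longrightarrow> \<forall>N\<in>F. submod R M N \<Longrightarrow> V \<subseteq> \<Union>F \<Longrightarrow> \<exists>N\<in>F. V \<subseteq> N"
proof (induction "card F" arbitrary: F rule: less_induct)
  case less
  show ?case
  proof (cases "\<exists>N\<in>F. V \<subseteq> \<Union>(F - {N})")
    case True
    then obtain N where N: "N \<in> F" "V \<subseteq> \<Union>(F - {N})" by blast
    then have "card (F - {N}) < card F" using less.prems(1) by (meson card_Diff1_less)
    then show ?thesis using less N by blast
  next
    case False
    have "\<zero>\<^bsub>M\<^esub> \<in> V" using V additive_subgroup.zero_closed unfolding submod_def by blast
    then obtain N\<^sub>1 where "N\<^sub>1 \<in> F" using less.prems(3) by blast
    moreover obtain x where "x \<in> V" "x \<notin> \<Union>(F - {N\<^sub>1})" using False calculation by blast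
    ultimately show ?thesis
      using submod_subset_if_element_only_in[OF mod cos less.prems(1,2) V less.prems(3)] by blast
  qed
qed

lemma module_avoidance_if_coset_avoidance:
  assumes "module R M" "coset_avoidance R"
  shows "module_avoidance R M"
  unfolding module_avoidance_def
proof (intro allI impI, elim conjE)
  fix F assume F: "finite F" "\<forall>N\<in>F. submod R M N" "carrier M = \<Union>F"
  then obtain N where "N \<in> F" "carrier M \<subseteq> N"
    using submod_avoidance_if_coset_avoidance[OF assms submod_carrier[OF assms(1)]] by blast
  moreover have "N \<subseteq> carrier M" using F(3) \<open>N \<in> F\<close> by blast
  ultimately show "carrier M \<in> F" by (metis subset_antisym)
qed

definition algebra_module :: "('s, 'd) ring_scheme \<Rightarrow> ('a \<Rightarrow> 's) \<Rightarrow> ('a, 's) module" where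
  "algebra_module S \<phi> = \<lparr>carrier = carrier S, mult = mult S, one = one S, zero = zero S, add = add S,
     smult = (\<lambda>r x. \<phi> r \<otimes>\<^bsub>S\<^esub> x)\<rparr>"

lemma algebra_module_simps [simp]:
  "carrier (algebra_module S \<phi>) = carrier S" "mult (algebra_module S \<phi>) = mult S"
  "one (algebra_module S \<phi>) = one S" "zero (algebra_module S \<phi>) = zero S"
  "add (algebra_module S \<phi>) = add S" "smult (algebra_module S \<phi>) = (\<lambda>r x. \<phi> r \<otimes>\<^bsub>S\<^esub> x)"
  by (simp_all add: algebra_module_def)

lemma algebra_module_is_module:
  assumes R: "cring R" and S: "cring S" and \<phi>: "\<phi> \<in> ring_hom R S"
  shows "module R (algebra_module S \<phi>)"
proof -
  interpret R: cring R by fact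
  interpret S: cring S by fact
  have closed: "\<And>a. a \<in> carrier R \<Longrightarrow> \<phi> a \<in> carrier S" using ring_hom_closed[OF \<phi>] .
  show ?thesis
  proof (rule moduleI)
    show "cring R" by fact
    show "abelian_group (algebra_module S \<phi>)"
    proof (rule abelian_groupI)
      fix x assume "x \<in> carrier (algebra_module S \<phi>)"
      then show "\<exists>y\<in>carrier (algebra_module S \<phi>). y \<oplus>\<^bsub>algebra_module S \<phi>\<^esub> x = \<zero>\<^bsub>algebra_module S \<phi>\<^esub>"
        by (intro bexI[of _ "\<ominus>\<^bsub>S\<^esub> x"]) (simp_all add: S.l_neg)
    qed (simp_all add: S.a_ac)
  qed (use closed in \<open>simp_all add: ring_hom_add[OF \<phi>] ring_hom_mult[OF \<phi>] ring_hom_one[OF \<phi>]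
         S.l_distr S.r_distr S.m_assoc\<close>)
qed

lemma additive_subgroup_algebra_module_iff:
  "additive_subgroup J (algebra_module S \<phi>) \<longleftrightarrow> additive_subgroup J S"
  unfolding additive_subgroup_def subgroup_def m_inv_def by simp

lemma ideal_is_submod:
  assumes "ideal J S" "\<phi> \<in> ring_hom R S"
  shows "submod R (algebra_module S \<phi>) J"
  unfolding submod_def additive_subgroup_algebra_module_iff
  using ideal.axioms(1)[OF assms(1)] ideal.I_l_closed[OF assms(1)] ring_hom_closed[OF assms(2)]
  by simp

lemma avoidance_ring_if_coset_avoidance:
  assumes "cring R" "coset_avoidance R" "cring S" "\<phi> \<in> ring_hom R S"
  shows "avoidance_ring S"
  unfolding avoidance_ring_def ideal_avoidance_def
proof (intro allI impI, elim conjE)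
  fix I F assume I: "ideal I S" and F: "finite F" "\<forall>J\<in>F. ideal J S" "I \<subseteq> \<Union>F"
  have "\<forall>J\<in>F. submod R (algebra_module S \<phi>) J" using F(2) ideal_is_submod[OF _ assms(4)] by blast
  then show "\<exists>J\<in>F. I \<subseteq> J"
    using submod_avoidance_if_coset_avoidance[OF algebra_module_is_module[OF assms(1,3,4)]
        assms(2) ideal_is_submod[OF I assms(4)] F(1) _ F(3)] by blast
qed

section \<open>The idealization counterexample\<close>

text \<open>An element \<open>(r, x, y)\<close> of the idealization \<open>R \<ltimes> Q\<^sup>2\<close> is encoded as the list \<open>[{r}, x, y]\<close>,
  so that the counterexamples live in the type \<open>'a set list\<close> fixed by the statement.\<close>

definition triple :: "'a \<Rightarrow> 'a set \<Rightarrow> 'a set \<Rightarrow> 'a set list" where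
  "triple r x y = [{r}, x, y]"
definition triple_base :: "'a set list \<Rightarrow> 'a" where "triple_base l = the_elem (l ! 0)"
definition triple_fst :: "'a set list \<Rightarrow> 'a set" where "triple_fst l = l ! 1"
definition triple_snd :: "'a set list \<Rightarrow> 'a set" where "triple_snd l = l ! 2"

lemma triple_proj [simp]:
  "triple_base (triple r x y) = r" "triple_fst (triple r x y) = x" "triple_snd (triple r x y) = y"
  by (simp_all add: triple_def triple_base_def triple_fst_def triple_snd_def)

lemma triple_eq [simp]: "triple r x y = triple r' x' y' \<longleftrightarrow> r = r' \<and> x = x' \<and> y = y'"
  by (auto simp: triple_def)

text \<open>Nagata's idealization of the \<open>R\<close>-module \<open>Q\<^sup>2\<close>, on which \<open>R\<close> acts through \<open>\<rho>\<close>: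
  \<open>(r, v) (s, w) = (r s, \<rho> r w + \<rho> s v)\<close>, so that \<open>0 \<ltimes> Q\<^sup>2\<close> is an ideal of square zero.\<close>

definition idealization :: "('a, 'c) ring_scheme \<Rightarrow> 'a set ring \<Rightarrow> ('a \<Rightarrow> 'a set) \<Rightarrow> 'a set list ring" where
  "idealization R Q \<rho> = \<lparr>carrier = {triple r x y | r x y. r \<in> carrier R \<and> x \<in> carrier Q \<and> y \<in> carrier Q},
     mult = (\<lambda>a b. triple (triple_base a \<otimes>\<^bsub>R\<^esub> triple_base b)
                  (\<rho> (triple_base a) \<otimes>\<^bsub>Q\<^esub> triple_fst b \<oplus>\<^bsub>Q\<^esub> \<rho> (triple_base b) \<otimes>\<^bsub>Q\<^esub> triple_fst a)
                  (\<rho> (triple_base a) \<otimes>\<^bsub>Q\<^esub> triple_snd b \<oplus>\<^bsub>Q\<^esub> \<rho> (triple_base b) \<otimes>\<^bsub>Q\<^esub> triple_snd a)),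
     one = triple \<one>\<^bsub>R\<^esub> \<zero>\<^bsub>Q\<^esub> \<zero>\<^bsub>Q\<^esub>, zero = triple \<zero>\<^bsub>R\<^esub> \<zero>\<^bsub>Q\<^esub> \<zero>\<^bsub>Q\<^esub>,
     add = (\<lambda>a b. triple (triple_base a \<oplus>\<^bsub>R\<^esub> triple_base b)
                  (triple_fst a \<oplus>\<^bsub>Q\<^esub> triple_fst b) (triple_snd a \<oplus>\<^bsub>Q\<^esub> triple_snd b))\<rparr>"

locale idealization_setting = R: cring R + Q: cring Q
  for R :: "('a, 'c) ring_scheme" and Q :: "'a set ring" +
  fixes \<rho> assumes \<rho>_hom: "\<rho> \<in> ring_hom R Q"
begin

abbreviation "S \<equiv> idealization R Q \<rho>"

lemma \<rho>_closed [simp]: "r \<in> carrier R \<Longrightarrow> \<rho> r \<in> carrier Q" using ring_hom_closed[OF \<rho>_hom] .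
lemma \<rho>_mult [simp]: "r \<in> carrier R \<Longrightarrow> s \<in> carrier R \<Longrightarrow> \<rho> (r \<otimes>\<^bsub>R\<^esub> s) = \<rho> r \<otimes>\<^bsub>Q\<^esub> \<rho> s"
  using ring_hom_mult[OF \<rho>_hom] .
lemma \<rho>_add [simp]: "r \<in> carrier R \<Longrightarrow> s \<in> carrier R \<Longrightarrow> \<rho> (r \<oplus>\<^bsub>R\<^esub> s) = \<rho> r \<oplus>\<^bsub>Q\<^esub> \<rho> s"
  using ring_hom_add[OF \<rho>_hom] .
lemma \<rho>_one [simp]: "\<rho> \<one>\<^bsub>R\<^esub> = \<one>\<^bsub>Q\<^esub>" using ring_hom_one[OF \<rho>_hom] .
lemma \<rho>_zero [simp]: "\<rho> \<zero>\<^bsub>R\<^esub> = \<zero>\<^bsub>Q\<^esub>"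
  using ring_hom_zero[OF \<rho>_hom R.ring_axioms Q.ring_axioms] .

lemma triple_in_carrier [simp]:
  "triple r x y \<in> carrier S \<longleftrightarrow> r \<in> carrier R \<and> x \<in> carrier Q \<and> y \<in> carrier Q"
  by (auto simp: idealization_def)

lemma idealizationE:
  assumes "a \<in> carrier S"
  obtains r x y where "a = triple r x y" "r \<in> carrier R" "x \<in> carrier Q" "y \<in> carrier Q"
  using assms unfolding idealization_def by auto

lemma idealization_mult [simp]:
  "triple r x y \<otimes>\<^bsub>S\<^esub> triple s x' y' =
    triple (r \<otimes>\<^bsub>R\<^esub> s) (\<rho> r \<otimes>\<^bsub>Q\<^esub> x' \<oplus>\<^bsub>Q\<^esub> \<rho> s \<otimes>\<^bsub>Q\<^esub> x) (\<rho> r \<otimes>\<^bsub>Q\<^esub> y' \<oplus>\<^bsub>Q\<^esub> \<rho> s \<otimes>\<^bsub>Q\<^esub> y)"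
  by (simp add: idealization_def)

lemma idealization_add [simp]:
  "triple r x y \<oplus>\<^bsub>S\<^esub> triple s x' y' = triple (r \<oplus>\<^bsub>R\<^esub> s) (x \<oplus>\<^bsub>Q\<^esub> x') (y \<oplus>\<^bsub>Q\<^esub> y')"
  by (simp add: idealization_def)

lemma idealization_one [simp]: "\<one>\<^bsub>S\<^esub> = triple \<one>\<^bsub>R\<^esub> \<zero>\<^bsub>Q\<^esub> \<zero>\<^bsub>Q\<^esub>" by (simp add: idealization_def)

lemma idealization_zero [simp]: "\<zero>\<^bsub>S\<^esub> = triple \<zero>\<^bsub>R\<^esub> \<zero>\<^bsub>Q\<^esub> \<zero>\<^bsub>Q\<^esub>" by (simp add: idealization_def)

lemma idealization_assoc_component:
  assumes "r \<in> carrier R" "s \<in> carrier R" "t \<in> carrier R"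
    and "x \<in> carrier Q" "x' \<in> carrier Q" "x'' \<in> carrier Q"
  shows "\<rho> (r \<otimes>\<^bsub>R\<^esub> s) \<otimes>\<^bsub>Q\<^esub> x'' \<oplus>\<^bsub>Q\<^esub> \<rho> t \<otimes>\<^bsub>Q\<^esub> (\<rho> r \<otimes>\<^bsub>Q\<^esub> x' \<oplus>\<^bsub>Q\<^esub> \<rho> s \<otimes>\<^bsub>Q\<^esub> x)
       = \<rho> r \<otimes>\<^bsub>Q\<^esub> (\<rho> s \<otimes>\<^bsub>Q\<^esub> x'' \<oplus>\<^bsub>Q\<^esub> \<rho> t \<otimes>\<^bsub>Q\<^esub> x') \<oplus>\<^bsub>Q\<^esub> \<rho> (s \<otimes>\<^bsub>R\<^esub> t) \<otimes>\<^bsub>Q\<^esub> x"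
proof -
  have c: "\<rho> r \<in> carrier Q" "\<rho> s \<in> carrier Q" "\<rho> t \<in> carrier Q" using assms by simp_all
  show ?thesis unfolding \<rho>_mult[OF assms(1,2)] \<rho>_mult[OF assms(2,3)] using c assms(4-6) by algebra
qed

lemma idealization_distr_component:
  assumes "r \<in> carrier R" "s \<in> carrier R" "t \<in> carrier R"
    and "x \<in> carrier Q" "x' \<in> carrier Q" "x'' \<in> carrier Q"
  shows "\<rho> (r \<oplus>\<^bsub>R\<^esub> s) \<otimes>\<^bsub>Q\<^esub> x'' \<oplus>\<^bsub>Q\<^esub> \<rho> t \<otimes>\<^bsub>Q\<^esub> (x \<oplus>\<^bsub>Q\<^esub> x')
       = (\<rho> r \<otimes>\<^bsub>Q\<^esub> x'' \<oplus>\<^bsub>Q\<^esub> \<rho> t \<otimes>\<^bsub>Q\<^esub> x) \<oplus>\<^bsub>Q\<^esub> (\<rho> s \<otimes>\<^bsub>Q\<^esub> x'' \<oplus>\<^bsub>Q\<^esub> \<rho> t \<otimes>\<^bsub>Q\<^esub> x')"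
proof -
  have c: "\<rho> r \<in> carrier Q" "\<rho> s \<in> carrier Q" "\<rho> t \<in> carrier Q" using assms by simp_all
  show ?thesis unfolding \<rho>_add[OF assms(1,2)] using c assms(4-6) by algebra
qed

lemma idealization_abelian_group: "abelian_group S"
proof (rule abelian_groupI)
  fix a assume "a \<in> carrier S"
  then show "\<exists>b\<in>carrier S. b \<oplus>\<^bsub>S\<^esub> a = \<zero>\<^bsub>S\<^esub>"
  proof (cases rule: idealizationE)
    case (1 r x y)
    then show ?thesis
      by (intro bexI[of _ "triple (\<ominus>\<^bsub>R\<^esub> r) (\<ominus>\<^bsub>Q\<^esub> x) (\<ominus>\<^bsub>Q\<^esub> y)"]) (simp_all add: R.l_neg Q.l_neg)
  qed
qed (auto elim!: idealizationE simp: R.a_ac Q.a_ac)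

lemma idealization_cring: "cring S"
proof (rule cringI)
  show "comm_monoid S"
  proof (rule comm_monoidI)
    fix a b c assume "a \<in> carrier S" "b \<in> carrier S" "c \<in> carrier S"
    then show "a \<otimes>\<^bsub>S\<^esub> b \<otimes>\<^bsub>S\<^esub> c = a \<otimes>\<^bsub>S\<^esub> (b \<otimes>\<^bsub>S\<^esub> c)"
      by (auto elim!: idealizationE simp: R.m_assoc idealization_assoc_component simp del: \<rho>_mult)
  qed (auto elim!: idealizationE simp: R.m_comm Q.a_comm Q.r_null)
next
  fix a b c assume "a \<in> carrier S" "b \<in> carrier S" "c \<in> carrier S"
  then show "(a \<oplus>\<^bsub>S\<^esub> b) \<otimes>\<^bsub>S\<^esub> c = a \<otimes>\<^bsub>S\<^esub> c \<oplus>\<^bsub>S\<^esub> b \<otimes>\<^bsub>S\<^esub> c"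
    by (auto elim!: idealizationE simp: R.l_distr idealization_distr_component simp del: \<rho>_add)
qed (rule idealization_abelian_group)

definition inclusion :: "'a \<Rightarrow> 'a set list" where "inclusion r = triple r \<zero>\<^bsub>Q\<^esub> \<zero>\<^bsub>Q\<^esub>"

lemma inclusion_hom: "inclusion \<in> ring_hom R S"
proof (rule ring_hom_memI)
  fix x assume "x \<in> carrier R" then show "inclusion x \<in> carrier S" by (simp add: inclusion_def)
next
  fix x y assume "x \<in> carrier R" "y \<in> carrier R"
  then show "inclusion (x \<otimes>\<^bsub>R\<^esub> y) = inclusion x \<otimes>\<^bsub>S\<^esub> inclusion y"
    and "inclusion (x \<oplus>\<^bsub>R\<^esub> y) = inclusion x \<oplus>\<^bsub>S\<^esub> inclusion y"
    by (simp_all add: inclusion_def Q.r_null del: \<rho>_mult)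
next
  show "inclusion \<one>\<^bsub>R\<^esub> = \<one>\<^bsub>S\<^esub>" by (simp add: inclusion_def)
qed

lemma inclusion_inj: "inj_on inclusion (carrier R)"
  by (auto simp: inclusion_def inj_on_def)

lemma inclusion_mult_triple:
  assumes "a \<in> carrier R" "b \<in> carrier R" "x \<in> carrier Q" "y \<in> carrier Q"
  shows "inclusion a \<otimes>\<^bsub>S\<^esub> triple b x y = triple (a \<otimes>\<^bsub>R\<^esub> b) (\<rho> a \<otimes>\<^bsub>Q\<^esub> x) (\<rho> a \<otimes>\<^bsub>Q\<^esub> y)"
  using assms by (simp add: inclusion_def Q.r_null del: \<rho>_mult)

lemma idealization_neg:
  "r \<in> carrier R \<Longrightarrow> x \<in> carrier Q \<Longrightarrow> y \<in> carrier Q \<Longrightarrow>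
    \<ominus>\<^bsub>S\<^esub> triple r x y = triple (\<ominus>\<^bsub>R\<^esub> r) (\<ominus>\<^bsub>Q\<^esub> x) (\<ominus>\<^bsub>Q\<^esub> y)"
  using cring.axioms(1)[OF idealization_cring]
  by (intro abelian_group.minus_equality[OF ring.is_abelian_group]) (simp_all add: R.l_neg Q.l_neg)

definition stripe :: "'a set \<Rightarrow> ('a set \<Rightarrow> 'a set \<Rightarrow> bool) \<Rightarrow> 'a set list set" where
  "stripe Z P = {triple r x y | r x y. r \<in> Z \<and> x \<in> carrier Q \<and> y \<in> carrier Q \<and> P x y}"

lemma stripe_mem [simp]:
  "triple r x y \<in> stripe Z P \<longleftrightarrow> r \<in> Z \<and> x \<in> carrier Q \<and> y \<in> carrier Q \<and> P x y"
  by (auto simp: stripe_def)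

lemma stripeE:
  assumes "a \<in> stripe Z P"
  obtains r x y where "a = triple r x y" "r \<in> Z" "x \<in> carrier Q" "y \<in> carrier Q" "P x y"
  using assms unfolding stripe_def by blast

definition linear_rel :: "('a set \<Rightarrow> 'a set \<Rightarrow> bool) \<Rightarrow> bool" where
  "linear_rel P \<longleftrightarrow> P \<zero>\<^bsub>Q\<^esub> \<zero>\<^bsub>Q\<^esub> \<and>
    (\<forall>x y x' y'. x \<in> carrier Q \<and> y \<in> carrier Q \<and> x' \<in> carrier Q \<and> y' \<in> carrier Q
        \<and> P x y \<and> P x' y' \<longrightarrow> P (x \<oplus>\<^bsub>Q\<^esub> x') (y \<oplus>\<^bsub>Q\<^esub> y')) \<and>
    (\<forall>x y q. x \<in> carrier Q \<and> y \<in> carrier Q \<and> q \<in> carrier Q \<and> P x y \<longrightarrow> P (q \<otimes>\<^bsub>Q\<^esub> x) (q \<otimes>\<^bsub>Q\<^esub> y))"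

lemma linear_relD:
  assumes "linear_rel P"
  shows "P \<zero>\<^bsub>Q\<^esub> \<zero>\<^bsub>Q\<^esub>"
    and "\<And>x y x' y'. x \<in> carrier Q \<Longrightarrow> y \<in> carrier Q \<Longrightarrow> x' \<in> carrier Q \<Longrightarrow> y' \<in> carrier Q
        \<Longrightarrow> P x y \<Longrightarrow> P x' y' \<Longrightarrow> P (x \<oplus>\<^bsub>Q\<^esub> x') (y \<oplus>\<^bsub>Q\<^esub> y')"
    and "\<And>x y q. x \<in> carrier Q \<Longrightarrow> y \<in> carrier Q \<Longrightarrow> q \<in> carrier Q
        \<Longrightarrow> P x y \<Longrightarrow> P (q \<otimes>\<^bsub>Q\<^esub> x) (q \<otimes>\<^bsub>Q\<^esub> y)"
  using assms unfolding linear_rel_def by simp_all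

lemma linear_rel_neg:
  assumes "linear_rel P" "x \<in> carrier Q" "y \<in> carrier Q" "P x y"
  shows "P (\<ominus>\<^bsub>Q\<^esub> x) (\<ominus>\<^bsub>Q\<^esub> y)"
proof -
  have "P ((\<ominus>\<^bsub>Q\<^esub> \<one>\<^bsub>Q\<^esub>) \<otimes>\<^bsub>Q\<^esub> x) ((\<ominus>\<^bsub>Q\<^esub> \<one>\<^bsub>Q\<^esub>) \<otimes>\<^bsub>Q\<^esub> y)"
    using linear_relD(3)[OF assms(1) assms(2,3) _ assms(4)] by simp
  moreover have "(\<ominus>\<^bsub>Q\<^esub> \<one>\<^bsub>Q\<^esub>) \<otimes>\<^bsub>Q\<^esub> x = \<ominus>\<^bsub>Q\<^esub> x" "(\<ominus>\<^bsub>Q\<^esub> \<one>\<^bsub>Q\<^esub>) \<otimes>\<^bsub>Q\<^esub> y = \<ominus>\<^bsub>Q\<^esub> y"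
    using assms(2,3) by algebra+
  ultimately show ?thesis by simp
qed

lemma linear_rel_True: "linear_rel (\<lambda>x y. True)" by (simp add: linear_rel_def)

lemma linear_rel_vertical: "linear_rel (\<lambda>x y. x = \<zero>\<^bsub>Q\<^esub>)" by (simp add: linear_rel_def Q.r_null)

lemma linear_rel_line:
  assumes "c \<in> carrier Q"
  shows "linear_rel (\<lambda>x y. y = c \<otimes>\<^bsub>Q\<^esub> x)"
  unfolding linear_rel_def using assms by (auto simp: Q.r_null Q.r_distr Q.m_lcomm)

lemma stripe_additive_subgroup:
  assumes Z: "additive_subgroup Z R" and P: "linear_rel P"
  shows "additive_subgroup (stripe Z P) S"
proof -
  interpret Z: additive_subgroup Z R by fact
  show ?thesis
  proof (intro additive_subgroupI subgroup.intro)
    fix a b assume "a \<in> stripe Z P" "b \<in> stripe Z P"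
    then show "a \<otimes>\<^bsub>add_monoid S\<^esub> b \<in> stripe Z P"
      by (auto elim!: stripeE intro: linear_relD(2)[OF P])
  next
    fix a assume "a \<in> stripe Z P"
    moreover have "inv\<^bsub>add_monoid S\<^esub> a = \<ominus>\<^bsub>S\<^esub> a" by (simp add: a_inv_def)
    ultimately show "inv\<^bsub>add_monoid S\<^esub> a \<in> stripe Z P"
      using Z.a_subset by (auto elim!: stripeE simp: idealization_neg linear_rel_neg[OF P])
  qed (use Z.a_subset linear_relD(1)[OF P] in \<open>auto elim!: stripeE\<close>)
qed

lemma stripe_ideal:
  assumes P: "linear_rel P"
  shows "ideal (stripe {\<zero>\<^bsub>R\<^esub>} P) S"
proof -
  interpret S: cring S by (rule idealization_cring)
  have "additive_subgroup (stripe {\<zero>\<^bsub>R\<^esub>} P) S"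
    using stripe_additive_subgroup[OF ideal.axioms(1)[OF R.zeroideal] P] .
  moreover have "s \<otimes>\<^bsub>S\<^esub> a \<in> stripe {\<zero>\<^bsub>R\<^esub>} P" if "a \<in> stripe {\<zero>\<^bsub>R\<^esub>} P" "s \<in> carrier S" for a s
    using that by (auto elim!: stripeE idealizationE simp: R.r_null linear_relD(3)[OF P])
  ultimately show ?thesis
    by (intro idealI S.ring_axioms) (auto simp: additive_subgroup_def S.m_comm elim!: stripeE)
qed

lemma stripe_submod:
  assumes P: "linear_rel P"
  shows "submod R (algebra_module S inclusion) (stripe (carrier R) P)"
proof -
  have "c \<odot>\<^bsub>algebra_module S inclusion\<^esub> a \<in> stripe (carrier R) P"
    if "c \<in> carrier R" "a \<in> stripe (carrier R) P" for c a
    using that by (auto elim!: stripeE simp: inclusion_mult_triple linear_relD(3)[OF P])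
  then show ?thesis
    unfolding submod_def additive_subgroup_algebra_module_iff
    using stripe_additive_subgroup[OF ideal.axioms(1)[OF R.oneideal] P] by blast
qed

text \<open>The \<open>|Q| + 1\<close> lines through the origin of \<open>Q\<^sup>2\<close>, with first coordinate ranging over \<open>Z\<close>.\<close>

definition lines :: "'a set \<Rightarrow> 'a set list set set" where
  "lines Z = (\<lambda>c. stripe Z (\<lambda>x y. y = c \<otimes>\<^bsub>Q\<^esub> x)) ` carrier Q \<union> {stripe Z (\<lambda>x y. x = \<zero>\<^bsub>Q\<^esub>)}"

lemma lines_finite: "finite (carrier Q) \<Longrightarrow> finite (lines Z)"
  unfolding lines_def by simp

lemma line_ideal:
  assumes "L \<in> lines {\<zero>\<^bsub>R\<^esub>}"
  shows "ideal L S"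
  using assms stripe_ideal linear_rel_line linear_rel_vertical unfolding lines_def by auto

lemma line_submod:
  assumes "L \<in> lines (carrier R)"
  shows "submod R (algebra_module S inclusion) L"
  using assms stripe_submod linear_rel_line linear_rel_vertical unfolding lines_def by auto

lemma line_subset_stripe: "L \<in> lines Z \<Longrightarrow> L \<subseteq> stripe Z (\<lambda>x y. True)"
  unfolding lines_def by (auto elim: stripeE)

lemma stripe_not_subset_line:
  assumes "\<one>\<^bsub>Q\<^esub> \<noteq> \<zero>\<^bsub>Q\<^esub>" "\<zero>\<^bsub>R\<^esub> \<in> Z" "L \<in> lines Z"
  shows "\<not> stripe Z (\<lambda>x y. True) \<subseteq> L"
proof -
  have "triple \<zero>\<^bsub>R\<^esub> \<one>\<^bsub>Q\<^esub> \<zero>\<^bsub>Q\<^esub> \<in> stripe Z (\<lambda>x y. True)"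
    and "triple \<zero>\<^bsub>R\<^esub> \<zero>\<^bsub>Q\<^esub> \<one>\<^bsub>Q\<^esub> \<in> stripe Z (\<lambda>x y. True)"
    using assms(2) by simp_all
  moreover have "triple \<zero>\<^bsub>R\<^esub> \<one>\<^bsub>Q\<^esub> \<zero>\<^bsub>Q\<^esub> \<notin> L \<or> triple \<zero>\<^bsub>R\<^esub> \<zero>\<^bsub>Q\<^esub> \<one>\<^bsub>Q\<^esub> \<notin> L"
    using assms(1,3) unfolding lines_def by (auto simp: Q.r_null)
  ultimately show ?thesis by blast
qed

lemma stripe_subset_lines:
  assumes "field Q"
  shows "stripe Z (\<lambda>x y. True) \<subseteq> \<Union>(lines Z)"
proof
  fix a assume "a \<in> stripe Z (\<lambda>x y. True)"
  then obtain r x y where a: "a = triple r x y" "r \<in> Z" "x \<in> carrier Q" "y \<in> carrier Q"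
    by (rule stripeE)
  show "a \<in> \<Union>(lines Z)"
  proof (cases "x = \<zero>\<^bsub>Q\<^esub>")
    case True
    then show ?thesis using a unfolding lines_def by auto
  next
    case False
    then have x: "x \<in> Units Q" using field.field_Units[OF assms] a(3) by blast
    define c where "c = y \<otimes>\<^bsub>Q\<^esub> inv\<^bsub>Q\<^esub> x"
    have c: "c \<in> carrier Q" using x a(4) unfolding c_def by simp
    have "c \<otimes>\<^bsub>Q\<^esub> x = y \<otimes>\<^bsub>Q\<^esub> (inv\<^bsub>Q\<^esub> x \<otimes>\<^bsub>Q\<^esub> x)"
      using x a(3,4) unfolding c_def by (simp add: Q.m_assoc)
    then have "a \<in> stripe Z (\<lambda>x y. y = c \<otimes>\<^bsub>Q\<^esub> x)" using x a by simp
    moreover have "stripe Z (\<lambda>x y. y = c \<otimes>\<^bsub>Q\<^esub> x) \<in> lines Z" using c unfolding lines_def by blast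
    ultimately show ?thesis by blast
  qed
qed

end

lemma (in abelian_monoid) finsum_three:
  assumes "a \<noteq> b" "a \<noteq> c" "b \<noteq> c" "f a \<in> carrier G" "f b \<in> carrier G" "f c \<in> carrier G"
  shows "finsum G f {a, b, c} = f a \<oplus> (f b \<oplus> f c)"
  using assms by (simp add: finsum_insert Pi_def)

locale finite_field_idealization = idealization_setting +
  assumes field: "field Q" and finite: "finite (carrier Q)"
    and surj: "\<rho> ` carrier R = carrier Q"
begin

lemma Q_one_not_zero: "\<one>\<^bsub>Q\<^esub> \<noteq> \<zero>\<^bsub>Q\<^esub>"
  using field domain.one_not_zero field.axioms(1) by blast

lemma idealization_one_not_zero: "\<one>\<^bsub>S\<^esub> \<noteq> \<zero>\<^bsub>S\<^esub>"
proof -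
  have "\<one>\<^bsub>R\<^esub> \<noteq> \<zero>\<^bsub>R\<^esub>"
  proof
    assume "\<one>\<^bsub>R\<^esub> = \<zero>\<^bsub>R\<^esub>"
    then have "\<rho> \<one>\<^bsub>R\<^esub> = \<rho> \<zero>\<^bsub>R\<^esub>" by simp
    with Q_one_not_zero show False by simp
  qed
  then show ?thesis by simp
qed

lemma not_avoidance_ring: "\<not> avoidance_ring S"
proof
  let ?I = "stripe {\<zero>\<^bsub>R\<^esub>} (\<lambda>x y. True)"
  assume "avoidance_ring S"
  moreover have "ideal ?I S" by (rule stripe_ideal[OF linear_rel_True])
  ultimately have "ideal_avoidance ?I S" unfolding avoidance_ring_def by blast
  moreover have "finite (lines {\<zero>\<^bsub>R\<^esub>}) \<and> (\<forall>L\<in>lines {\<zero>\<^bsub>R\<^esub>}. ideal L S)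
      \<and> ?I \<subseteq> \<Union>(lines {\<zero>\<^bsub>R\<^esub>})"
    using lines_finite[OF finite] line_ideal stripe_subset_lines[OF field] by blast
  ultimately have "\<exists>L\<in>lines {\<zero>\<^bsub>R\<^esub>}. ?I \<subseteq> L"
    unfolding ideal_avoidance_def by (rule mp[OF spec[where x = "lines {\<zero>\<^bsub>R\<^esub>}"]])
  then show False using stripe_not_subset_line[OF Q_one_not_zero singletonI] by blast
qed

abbreviation "SM \<equiv> algebra_module S inclusion"

lemma module_SM: "module R SM"
  using algebra_module_is_module[OF R.is_cring idealization_cring inclusion_hom] .

lemma carrier_SM: "carrier SM = stripe (carrier R) (\<lambda>x y. True)"
  by (auto elim: idealizationE stripeE)

lemma not_module_avoidance: "\<not> module_avoidance R SM"
proof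
  assume "module_avoidance R SM"
  have "carrier SM = \<Union>(lines (carrier R))"
    using stripe_subset_lines[OF field] line_subset_stripe unfolding carrier_SM by blast
  then have "finite (lines (carrier R)) \<and> (\<forall>L\<in>lines (carrier R). submod R SM L)
      \<and> carrier SM = \<Union>(lines (carrier R))"
    using lines_finite[OF finite] line_submod by blast
  with \<open>module_avoidance R SM\<close> have "carrier SM \<in> lines (carrier R)"
    unfolding module_avoidance_def by (rule mp[OF spec[where x = "lines (carrier R)"]])
  then show False
    using stripe_not_subset_line[OF Q_one_not_zero R.zero_closed] carrier_SM by blast
qed

lemma fin_gen_SM: "fin_gen_module R SM"
proof -
  interpret SM: module R SM by (rule module_SM)
  define e\<^sub>0 where "e\<^sub>0 = triple \<one>\<^bsub>R\<^esub> \<zero>\<^bsub>Q\<^esub> \<zero>\<^bsub>Q\<^esub>"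
  define e\<^sub>1 where "e\<^sub>1 = triple \<zero>\<^bsub>R\<^esub> \<one>\<^bsub>Q\<^esub> \<zero>\<^bsub>Q\<^esub>"
  define e\<^sub>2 where "e\<^sub>2 = triple \<zero>\<^bsub>R\<^esub> \<zero>\<^bsub>Q\<^esub> \<one>\<^bsub>Q\<^esub>"
  have distinct: "e\<^sub>0 \<noteq> e\<^sub>1" "e\<^sub>0 \<noteq> e\<^sub>2" "e\<^sub>1 \<noteq> e\<^sub>2"
    using Q_one_not_zero unfolding e\<^sub>0_def e\<^sub>1_def e\<^sub>2_def by auto
  show ?thesis unfolding fin_gen_module_def
  proof (intro exI[of _ "{e\<^sub>0, e\<^sub>1, e\<^sub>2}"] conjI ballI)
    show "finite {e\<^sub>0, e\<^sub>1, e\<^sub>2}" by simp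
    show "{e\<^sub>0, e\<^sub>1, e\<^sub>2} \<subseteq> carrier SM" unfolding e\<^sub>0_def e\<^sub>1_def e\<^sub>2_def by simp
    fix z assume "z \<in> carrier SM"
    obtain r p q where z: "z = triple r p q" "r \<in> carrier R" "p \<in> carrier Q" "q \<in> carrier Q"
      using \<open>z \<in> carrier SM\<close> by (auto elim: idealizationE)
    obtain a b where ab: "a \<in> carrier R" "\<rho> a = p" "b \<in> carrier R" "\<rho> b = q"
      using surj z(3,4) by (metis imageE)
    define c where "c g = (if g = e\<^sub>0 then r else if g = e\<^sub>1 then a else b)" for g
    have c: "c \<in> {e\<^sub>0, e\<^sub>1, e\<^sub>2} \<rightarrow> carrier R" using z ab unfolding c_def by auto
    have "(\<Oplus>\<^bsub>SM\<^esub> g \<in> {e\<^sub>0, e\<^sub>1, e\<^sub>2}. c g \<odot>\<^bsub>SM\<^esub> g)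
        = c e\<^sub>0 \<odot>\<^bsub>SM\<^esub> e\<^sub>0 \<oplus>\<^bsub>SM\<^esub> (c e\<^sub>1 \<odot>\<^bsub>SM\<^esub> e\<^sub>1 \<oplus>\<^bsub>SM\<^esub> c e\<^sub>2 \<odot>\<^bsub>SM\<^esub> e\<^sub>2)"
      using c by (intro SM.finsum_three distinct SM.smult_closed) (auto simp: e\<^sub>0_def e\<^sub>1_def e\<^sub>2_def)
    also have "\<dots> = z"
    proof -
      have "c e\<^sub>0 = r" "c e\<^sub>1 = a" "c e\<^sub>2 = b" using distinct unfolding c_def by auto
      then have "c e\<^sub>0 \<odot>\<^bsub>SM\<^esub> e\<^sub>0 = triple r \<zero>\<^bsub>Q\<^esub> \<zero>\<^bsub>Q\<^esub>"
        and "c e\<^sub>1 \<odot>\<^bsub>SM\<^esub> e\<^sub>1 = triple \<zero>\<^bsub>R\<^esub> p \<zero>\<^bsub>Q\<^esub>"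
        and "c e\<^sub>2 \<odot>\<^bsub>SM\<^esub> e\<^sub>2 = triple \<zero>\<^bsub>R\<^esub> \<zero>\<^bsub>Q\<^esub> q"
        using z ab unfolding e\<^sub>0_def e\<^sub>1_def e\<^sub>2_def
        by (simp_all add: inclusion_mult_triple Q.r_null R.r_null)
      then show ?thesis using z by simp
    qed
    finally have "z = (\<Oplus>\<^bsub>SM\<^esub> g \<in> {e\<^sub>0, e\<^sub>1, e\<^sub>2}. c g \<odot>\<^bsub>SM\<^esub> g)" ..
    with c show "\<exists>c. c \<in> {e\<^sub>0, e\<^sub>1, e\<^sub>2} \<rightarrow> carrier R \<and> z = (\<Oplus>\<^bsub>SM\<^esub> g \<in> {e\<^sub>0, e\<^sub>1, e\<^sub>2}. c g \<odot>\<^bsub>SM\<^esub> g)"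
      by blast
  qed
qed

end

section \<open>Equivalence of the four conditions\<close>

definition infinite_residue_fields :: "('a, 'c) ring_scheme \<Rightarrow> bool" where
  "infinite_residue_fields R \<longleftrightarrow> (\<forall>M. maximalideal M R \<longrightarrow> infinite (carrier (R Quot M)))"

lemma all_extensions_avoidance_if_all_algebras_avoidance:
  "all_algebras_avoidance R T \<Longrightarrow> all_extensions_avoidance R T"
  unfolding all_algebras_avoidance_def all_extensions_avoidance_def by blast

lemma all_fg_modules_avoid_if_all_modules_avoid:
  "all_modules_avoid R T \<Longrightarrow> all_fg_modules_avoid R T"
  unfolding all_modules_avoid_def all_fg_modules_avoid_def by blast

lemma all_modules_avoid_if_infinite_residue_fields:
  assumes "cring R" "infinite_residue_fields R"
  shows "all_modules_avoid R T"
  using module_avoidance_if_coset_avoidance cring.coset_avoidance_if_infinite_residue_fields assms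
  unfolding all_modules_avoid_def infinite_residue_fields_def by blast

lemma all_algebras_avoidance_if_infinite_residue_fields:
  assumes "cring R" "infinite_residue_fields R"
  shows "all_algebras_avoidance R T"
  using avoidance_ring_if_coset_avoidance cring.coset_avoidance_if_infinite_residue_fields assms
  unfolding all_algebras_avoidance_def infinite_residue_fields_def by blast

lemma finite_residue_field_counterexamples:
  fixes R :: "'a ring"
  assumes R: "cring R" and M: "maximalideal M R" and finite: "finite (carrier (R Quot M))"
  shows "\<not> all_extensions_avoidance R TYPE('a set list)"
    and "\<not> all_fg_modules_avoid R TYPE('a set list)"
proof -
  interpret M: maximalideal M R by fact
  have field: "field (R Quot M)" using M.quotient_is_field R by blast
  have surj: "a_r_coset R M ` carrier R = carrier (R Quot M)"
    by (auto simp: FactRing_def A_RCOSETS_def')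
  interpret finite_field_idealization R "R Quot M" "a_r_coset R M"
    by (intro finite_field_idealization.intro idealization_setting.intro
        finite_field_idealization_axioms.intro idealization_setting_axioms.intro
        R field domain.axioms(1) field.axioms(1) M.rcos_ring_hom finite surj)
  show "\<not> all_extensions_avoidance R TYPE('a set list)"
    unfolding all_extensions_avoidance_def
    using idealization_cring idealization_one_not_zero inclusion_hom inclusion_inj not_avoidance_ring
    by blast
  show "\<not> all_fg_modules_avoid R TYPE('a set list)"
    unfolding all_fg_modules_avoid_def using module_SM fin_gen_SM not_module_avoidance by blast
qed

theorem proposition3p21:
  fixes R :: "'a ring"
  assumes "cring R" and "\<one>\<^bsub>R\<^esub> \<noteq> \<zero>\<^bsub>R\<^esub>"
  shows "(all_modules_avoid R TYPE('a set list) \<longrightarrow> all_algebras_avoidance R TYPE('s))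
       \<and> (all_algebras_avoidance R TYPE('a set list) \<longrightarrow> all_extensions_avoidance R TYPE('t))
       \<and> (all_extensions_avoidance R TYPE('a set list) \<longrightarrow> all_fg_modules_avoid R TYPE('n))
       \<and> (all_fg_modules_avoid R TYPE('a set list) \<longrightarrow> all_modules_avoid R TYPE('m))"
proof -
  have necessary: "infinite_residue_fields R"
    if "all_extensions_avoidance R TYPE('a set list) \<or> all_fg_modules_avoid R TYPE('a set list)"
    using that finite_residue_field_counterexamples[OF assms(1)]
    unfolding infinite_residue_fields_def by blast
  show ?thesis
    using necessary all_extensions_avoidance_if_all_algebras_avoidance
      all_fg_modules_avoid_if_all_modules_avoid
      all_modules_avoid_if_infinite_residue_fields[OF assms(1)]
      all_algebras_avoidance_if_infinite_residue_fields[OF assms(1)]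
    by meson
qed

end
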